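(* For all integers $n,k,h$ with $2\le k\le n-1$ and $0\le h\le n-k$, $\kappa_s^{(h)}(S_{n,k})=n+h(k-2)-1$.
   Context: For integers $1\le k\le n-1$, let $I_n=\{1,\dots,n\}$ and $P(n,k)$ the set of $k$-permutations $p_1p_2\cdots p_k$ of distinct elements of $I_n$. The $(n,k)$-star graph $S_{n,k}$ has vertex set $P(n,k)$; a vertex $p=p_1p_2\cdots p_k$ is adjacent to (a) each vertex obtained by swapping $p_1$ with $p_i$ for $2\le i\le k$, and (b) each vertex $\alpha p_2\cdots p_k$ with $\alpha\in I_n\setminus\{p_1,\dots,p_k\}$. For a connected graph $G$ and integer $h\ge 0$, a set $S\subseteq V(G)$ is an $h$-cut ($h$-super vertex-cut) if $G-S$ is disconnected and has minimum degree at least $h$; the $h$-super connectivity $\kappa_s^{(h)}(G)$ is the minimum cardinality of an $h$-cut of $G$. *)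

theory Defs
  imports Main
begin

definition induced_adj :: "'a set \<Rightarrow> ('a \<Rightarrow> 'a \<Rightarrow> bool) \<Rightarrow> 'a \<Rightarrow> 'a \<Rightarrow> bool" where
  "induced_adj W adj x y \<longleftrightarrow> x \<in> W \<and> y \<in> W \<and> adj x y"

definition disconnected_on :: "'a set \<Rightarrow> ('a \<Rightarrow> 'a \<Rightarrow> bool) \<Rightarrow> bool" where
  "disconnected_on W adj \<longleftrightarrow> (\<exists>u\<in>W. \<exists>v\<in>W. \<not> (induced_adj W adj)\<^sup>*\<^sup>* u v)"

definition min_degree_ge :: "'a set \<Rightarrow> ('a \<Rightarrow> 'a \<Rightarrow> bool) \<Rightarrow> nat \<Rightarrow> bool" where
  "min_degree_ge W adj h \<longleftrightarrow> (\<forall>v\<in>W. card {u\<in>W. adj v u} \<ge> h)"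

definition h_cut :: "'a set \<Rightarrow> ('a \<Rightarrow> 'a \<Rightarrow> bool) \<Rightarrow> nat \<Rightarrow> 'a set \<Rightarrow> bool" where
  "h_cut V adj h S \<longleftrightarrow> S \<subseteq> V \<and> disconnected_on (V - S) adj \<and> min_degree_ge (V - S) adj h"

definition h_super_connectivity :: "'a set \<Rightarrow> ('a \<Rightarrow> 'a \<Rightarrow> bool) \<Rightarrow> nat \<Rightarrow> nat" where
  "h_super_connectivity V adj h = Inf {card S | S. h_cut V adj h S}"

text \<open>(n,k)-star graph: vertices are k-permutations of {1..n}, as distinct lists (position 0 = p_1).\<close>
definition star_verts :: "nat \<Rightarrow> nat \<Rightarrow> nat list set" where
  "star_verts n k = {p. distinct p \<and> length p = k \<and> set p \<subseteq> {1..n}}"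

definition star_adj :: "nat \<Rightarrow> nat \<Rightarrow> nat list \<Rightarrow> nat list \<Rightarrow> bool" where
  "star_adj n k p q \<longleftrightarrow> p \<in> star_verts n k \<and>
     ((\<exists>i. 1 \<le> i \<and> i < k \<and> q = p[0 := p ! i, i := p ! 0]) \<or>
      (\<exists>a. a \<in> {1..n} - set p \<and> q = a # tl p))"

end

theory Submission
  imports Defs
begin

(* We work with the star graph S(A,k) over an arbitrary finite alphabet A
   (vertices: k-permutations of A), because the lower bound is proved by
   induction on k and removing the last symbol c of a vertex turns S(A,k+1)
   into disjoint copies of S(A-{c},k), the "fibres", joined by the edges that
   swap the first and the last symbol. *)

section \<open>The star graph over an arbitrary alphabet\<close>

definition perms :: "'a set \<Rightarrow> nat \<Rightarrow> 'a list set" where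
  "perms A k = {p. distinct p \<and> length p = k \<and> set p \<subseteq> A}"

definition star :: "'a set \<Rightarrow> nat \<Rightarrow> 'a list \<Rightarrow> 'a list \<Rightarrow> bool" where
  "star A k p q \<longleftrightarrow> p \<in> perms A k \<and>
     ((\<exists>i. 1 \<le> i \<and> i < k \<and> q = p[0 := p ! i, i := p ! 0]) \<or>
      (\<exists>a. a \<in> A - set p \<and> q = a # tl p))"

lemma starE:
  assumes "star A k p q"
  obtains (swap) i where "p \<in> perms A k" "1 \<le> i" "i < k" "q = p[0 := p ! i, i := p ! 0]"
    | (new) a where "p \<in> perms A k" "a \<in> A - set p" "q = a # tl p"
  using assms unfolding star_def by auto

lemma star_swapI:
  "p \<in> perms A k \<Longrightarrow> 1 \<le> i \<Longrightarrow> i < k \<Longrightarrow> q = p[0 := p ! i, i := p ! 0] \<Longrightarrow> star A k p q"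
  unfolding star_def by auto

lemma star_newI: "p \<in> perms A k \<Longrightarrow> a \<in> A - set p \<Longrightarrow> q = a # tl p \<Longrightarrow> star A k p q"
  unfolding star_def by auto

lemma finite_perms: "finite A \<Longrightarrow> finite (perms A k)"
  unfolding perms_def by (rule finite_subset[OF _ finite_lists_length_eq[of A k]]) auto

lemma finite_subset_perms: "finite A \<Longrightarrow> X \<subseteq> perms A k \<Longrightarrow> finite X"
  using finite_perms finite_subset by blast

lemma card_perms:
  assumes "finite A" "k \<le> card A"
  shows "card (perms A k) = \<Prod>{card A - k + 1..card A}"
proof -
  have "perms A k = {xs. length xs = k \<and> distinct xs \<and> set xs \<subseteq> A}" unfolding perms_def by auto
  then show ?thesis using card_lists_distinct_length_eq[OF assms] by simp
qed

lemma perms_nonempty: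
  assumes "finite A" "k \<le> card A" shows "perms A k \<noteq> {}"
proof -
  have "card (perms A k) > 0" using card_perms[OF assms] by (simp add: prod_pos)
  then show ?thesis by auto
qed

lemma star_perms:
  assumes "star A k p q" "1 \<le> k"
  shows "p \<in> perms A k" "q \<in> perms A k"
proof -
  show pV: "p \<in> perms A k" using assms unfolding star_def by auto
  have p: "distinct p" "length p = k" "set p \<subseteq> A" using pV unfolding perms_def by auto
  from assms(1) show "q \<in> perms A k"
  proof (cases rule: starE)
    case (swap i)
    then show ?thesis using p assms(2) unfolding perms_def by simp
  next
    case (new a)
    then show ?thesis using p assms(2) unfolding perms_def by (cases p) auto
  qed
qed

lemma star_sym: assumes "star A k p q" "1 \<le> k" shows "star A k q p"
proof -
  have qV: "q \<in> perms A k" using star_perms[OF assms] by simp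
  have p: "distinct p" "length p = k" "set p \<subseteq> A" using assms unfolding star_def perms_def by auto
  from assms(1) show ?thesis
  proof (cases rule: starE)
    case (swap i)
    have "p = q[0 := q ! i, i := q ! 0]"
      using swap p by (auto simp: nth_list_update list_eq_iff_nth_eq)
    then show ?thesis using swap qV by (intro star_swapI) auto
  next
    case (new a)
    obtain x xs where "p = x # xs" using p assms(2) by (cases p) auto
    then show ?thesis using new p qV by (intro star_newI[of _ _ _ x]) auto
  qed
qed

lemma star_irrefl: "\<not> star A k p p"
proof
  assume a: "star A k p p"
  have p: "distinct p" "length p = k" using a unfolding star_def perms_def by auto
  from a show False
  proof (cases rule: starE)
    case (swap i)
    then have "p ! 0 = p ! i" using p(2)
      by (metis length_list_update nth_list_update_eq nth_list_update_neq not_one_le_zero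
          order_less_le_trans zero_less_one)
    then show False using swap p nth_eq_iff_index_eq by fastforce
  next
    case (new b) then show False by (metis DiffD2 list.set_intros(1))
  qed
qed

section \<open>Decomposition along the last symbol\<close>

definition swap_ends :: "'a list \<Rightarrow> 'a list" where
  "swap_ends p = (last p # tl (butlast p)) @ [hd p]"

lemma swap_ends_snoc: "xs \<noteq> [] \<Longrightarrow> swap_ends (xs @ [c]) = (c # tl xs) @ [hd xs]"
  unfolding swap_ends_def by simp

lemma inj_on_swap_ends: "inj_on swap_ends {p. 2 \<le> length p}"
proof (rule inj_on_inverseI[where g = swap_ends])
  fix p :: "'a list" assume "p \<in> {p. 2 \<le> length p}"
  then obtain x zs c where "p = x # zs @ [c]"
    by (cases p; cases "tl p" rule: rev_cases) auto
  then show "swap_ends (swap_ends p) = p" unfolding swap_ends_def by simp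
qed

lemma card_swap_ends_image:
  assumes "1 \<le> k" "D \<subseteq> perms A (Suc k)"
  shows "card (swap_ends ` D) = card D"
  using assms by (intro card_image inj_on_subset[OF inj_on_swap_ends]) (auto simp: perms_def)

lemma perms_snoc_iff: "xs @ [c] \<in> perms A (Suc k) \<longleftrightarrow> xs \<in> perms (A - {c}) k \<and> c \<in> A"
  unfolding perms_def by auto

lemma perms_snoc_split:
  assumes "p \<in> perms A (Suc k)"
  shows "p = butlast p @ [last p]" "butlast p \<in> perms (A - {last p}) k" "last p \<in> A"
proof -
  have "p \<noteq> []" using assms unfolding perms_def by auto
  then show p: "p = butlast p @ [last p]" by simp
  from assms show "butlast p \<in> perms (A - {last p}) k" "last p \<in> A"
    using perms_snoc_iff[of "butlast p" "last p" A k] p by auto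
qed

lemma swap_snoc_inner:
  "i < length xs \<Longrightarrow>
   (xs @ [c])[0 := (xs @ [c]) ! i, i := (xs @ [c]) ! 0] = xs[0 := xs ! i, i := xs ! 0] @ [c]"
  by (cases xs; cases i) (auto simp: list_update_append nth_append)

lemma swap_snoc_last:
  "xs \<noteq> [] \<Longrightarrow> (xs @ [c])[0 := (xs @ [c]) ! length xs, length xs := (xs @ [c]) ! 0] = swap_ends (xs @ [c])"
  by (cases xs) (auto simp: swap_ends_def)

lemma star_snoc_iff:
  assumes "1 \<le> k" "xs \<in> perms (A - {c}) k" "c \<in> A"
  shows "star A (Suc k) (xs @ [c]) (ys @ [c]) \<longleftrightarrow> star (A - {c}) k xs ys"
proof
  have xs: "distinct xs" "length xs = k" "set xs \<subseteq> A - {c}" using assms(2) unfolding perms_def by auto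
  have ne: "xs \<noteq> []" using xs assms(1) by auto
  assume "star A (Suc k) (xs @ [c]) (ys @ [c])"
  then show "star (A - {c}) k xs ys"
  proof (cases rule: starE)
    case (swap i)
    show ?thesis
    proof (cases "i < k")
      case True
      then show ?thesis using swap swap_snoc_inner[of i xs c] xs assms(2) by (intro star_swapI) auto
    next
      case False
      then have "i = length xs" using swap xs by simp
      then have "ys @ [c] = swap_ends (xs @ [c])" using swap swap_snoc_last[OF ne] by simp
      then have "hd xs = c" using swap_ends_snoc[OF ne] by simp
      then show ?thesis using xs ne by (metis DiffD2 hd_in_set insertI1 subsetD)
    qed
  next
    case (new b)
    then show ?thesis using ne assms(2) by (intro star_newI) auto
  qed
next
  have xs: "distinct xs" "length xs = k" "set xs \<subseteq> A - {c}" using assms(2) unfolding perms_def by auto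
  have ne: "xs \<noteq> []" using xs assms(1) by auto
  have big: "xs @ [c] \<in> perms A (Suc k)" using assms(2,3) by (simp add: perms_snoc_iff)
  assume "star (A - {c}) k xs ys"
  then show "star A (Suc k) (xs @ [c]) (ys @ [c])"
  proof (cases rule: starE)
    case (swap i)
    then show ?thesis using swap_snoc_inner[of i xs c] xs big by (intro star_swapI) auto
  next
    case (new b)
    then show ?thesis using ne big by (intro star_newI[of _ _ _ b]) auto
  qed
qed

lemma star_snoc_cases:
  assumes "1 \<le> k" "xs \<in> perms (A - {c}) k" "c \<in> A" "star A (Suc k) (xs @ [c]) q"
  shows "(\<exists>ys. q = ys @ [c] \<and> star (A - {c}) k xs ys) \<or> q = swap_ends (xs @ [c])"
proof -
  have xs: "length xs = k" using assms(2) unfolding perms_def by auto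
  have ne: "xs \<noteq> []" using xs assms(1) by auto
  from assms(4) show ?thesis
  proof (cases rule: starE)
    case (swap i)
    show ?thesis
    proof (cases "i < k")
      case True
      then show ?thesis using swap swap_snoc_inner[of i xs c] xs star_snoc_iff[OF assms(1-3)]
        by (metis length_append_singleton star_swapI)
    next
      case False
      then have "i = length xs" using swap xs by simp
      then show ?thesis using swap swap_snoc_last[OF ne] by simp
    qed
  next
    case (new b)
    then have "q = (b # tl xs) @ [c]" "star (A - {c}) k xs (b # tl xs)"
      using ne assms(2) by (auto intro: star_newI)
    then show ?thesis by blast
  qed
qed

lemma star_swap_ends:
  assumes "1 \<le> k" "xs \<in> perms (A - {c}) k" "c \<in> A"
  shows "star A (Suc k) (xs @ [c]) (swap_ends (xs @ [c]))" "last (swap_ends (xs @ [c])) \<noteq> c"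
proof -
  have xs: "length xs = k" "set xs \<subseteq> A - {c}" using assms(2) unfolding perms_def by auto
  have ne: "xs \<noteq> []" using xs assms(1) by auto
  have big: "xs @ [c] \<in> perms A (Suc k)" using assms(2,3) by (simp add: perms_snoc_iff)
  show "star A (Suc k) (xs @ [c]) (swap_ends (xs @ [c]))"
    using swap_snoc_last[OF ne] big xs assms(1) by (intro star_swapI[of _ _ _ "length xs"]) auto
  show "last (swap_ends (xs @ [c])) \<noteq> c"
    using xs(2) hd_in_set[OF ne] swap_ends_snoc[OF ne] by auto
qed

definition fibre :: "'a \<Rightarrow> 'a list set \<Rightarrow> 'a list set" where
  "fibre c D = {xs. xs @ [c] \<in> D}"

lemma fibre_perms: "D \<subseteq> perms A (Suc k) \<Longrightarrow> fibre c D \<subseteq> perms (A - {c}) k"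
  unfolding fibre_def using perms_snoc_iff[of _ c A k] by auto

lemma fibre_Diff: "c \<in> A \<Longrightarrow> perms (A - {c}) k - fibre c F = fibre c (perms A (Suc k) - F)"
  unfolding fibre_def by (auto simp: perms_snoc_iff)

lemma fibre_last: "D \<subseteq> perms A (Suc k) \<Longrightarrow> p \<in> D \<Longrightarrow> butlast p \<in> fibre (last p) D"
  using perms_snoc_split(1)[of p A k] unfolding fibre_def by auto

lemma card_snoc_image: "card ((\<lambda>xs. xs @ [c]) ` X) = card X"
  by (rule card_image) (auto simp: inj_on_def)

lemma card_two_fibres_le:
  assumes "finite F" "c1 \<noteq> c2"
  shows "card (fibre c1 F) + card (fibre c2 F) \<le> card F"
proof -
  have "(\<lambda>xs. xs @ [c]) ` fibre c F \<subseteq> F" for c unfolding fibre_def by auto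
  then have fin: "finite ((\<lambda>xs. xs @ [c]) ` fibre c F)" for c using assms(1) finite_subset by blast
  have "card ((\<lambda>xs. xs @ [c1]) ` fibre c1 F \<union> (\<lambda>xs. xs @ [c2]) ` fibre c2 F) \<le> card F"
    using assms(1) by (intro card_mono) (auto simp: fibre_def)
  moreover have "card ((\<lambda>xs. xs @ [c1]) ` fibre c1 F \<union> (\<lambda>xs. xs @ [c2]) ` fibre c2 F)
     = card ((\<lambda>xs. xs @ [c1]) ` fibre c1 F) + card ((\<lambda>xs. xs @ [c2]) ` fibre c2 F)"
    using assms(2) fin by (intro card_Un_disjoint) auto
  ultimately show ?thesis by (simp add: card_snoc_image)
qed

text \<open>Degrees drop by at most one when passing to a fibre (the lost neighbour is the swap_ends one).\<close>
lemma min_degree_fibre: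
  assumes "finite A" "1 \<le> k" "c \<in> A" "D \<subseteq> perms A (Suc k)"
    and "min_degree_ge D (star A (Suc k)) h"
  shows "min_degree_ge (fibre c D) (star (A - {c}) k) (h - 1)"
  unfolding min_degree_ge_def
proof
  fix xs assume xs: "xs \<in> fibre c D"
  let ?S = "{ys \<in> fibre c D. star (A - {c}) k xs ys}"
  have xsV: "xs \<in> perms (A - {c}) k" using xs fibre_perms[OF assms(4)] by blast
  have fS: "finite ?S" using finite_subset_perms[of "A - {c}" ?S k] fibre_perms[OF assms(4)] assms(1) by blast
  have "h \<le> card {u \<in> D. star A (Suc k) (xs @ [c]) u}"
    using assms(5) xs unfolding min_degree_ge_def fibre_def by blast
  also have "{u \<in> D. star A (Suc k) (xs @ [c]) u} \<subseteq> insert (swap_ends (xs @ [c])) ((\<lambda>ys. ys @ [c]) ` ?S)"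
    using star_snoc_cases[OF assms(2) xsV assms(3)] unfolding fibre_def by fastforce
  then have "card {u \<in> D. star A (Suc k) (xs @ [c]) u}
      \<le> card (insert (swap_ends (xs @ [c])) ((\<lambda>ys. ys @ [c]) ` ?S))"
    using fS by (intro card_mono) auto
  also have "\<dots> \<le> Suc (card ?S)"
    using fS by (simp add: card_insert_if card_snoc_image)
  finally show "h - 1 \<le> card ?S" by simp
qed

lemma min_degree_fibre_closed:
  assumes "finite A" "1 \<le> k" "c \<in> A" "D \<subseteq> perms A (Suc k)" "D \<subseteq> W"
    and "\<And>p. p \<in> D \<Longrightarrow> last p = c"
    and "\<And>p q. p \<in> D \<Longrightarrow> q \<in> W \<Longrightarrow> star A (Suc k) p q \<Longrightarrow> q \<in> D"
    and "min_degree_ge W (star A (Suc k)) h"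
  shows "min_degree_ge (fibre c D) (star (A - {c}) k) h"
  unfolding min_degree_ge_def
proof
  fix xs assume xs: "xs \<in> fibre c D"
  let ?S = "{ys \<in> fibre c D. star (A - {c}) k xs ys}"
  have xsV: "xs \<in> perms (A - {c}) k" using xs fibre_perms[OF assms(4)] by blast
  have fS: "finite ?S" using finite_subset_perms[of "A - {c}" ?S k] fibre_perms[OF assms(4)] assms(1) by blast
  have xD: "xs @ [c] \<in> D" using xs unfolding fibre_def by simp
  have "h \<le> card {u \<in> W. star A (Suc k) (xs @ [c]) u}"
    using assms(8) xD assms(5) unfolding min_degree_ge_def by blast
  also have "{u \<in> W. star A (Suc k) (xs @ [c]) u} \<subseteq> (\<lambda>ys. ys @ [c]) ` ?S"
  proof
    fix u assume u: "u \<in> {u \<in> W. star A (Suc k) (xs @ [c]) u}"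
    then have uD: "u \<in> D" using assms(7)[OF xD] by blast
    have "u = butlast u @ [last u]" using perms_snoc_split(1)[of u A k] uD assms(4) by blast
    then have ue: "u = butlast u @ [c]" using assms(6)[OF uD] by simp
    then have "butlast u \<in> fibre c D" using uD unfolding fibre_def by simp
    moreover have "star (A - {c}) k xs (butlast u)"
      using u ue star_snoc_iff[OF assms(2) xsV assms(3), of "butlast u"] by simp
    ultimately show "u \<in> (\<lambda>ys. ys @ [c]) ` ?S" using ue by blast
  qed
  then have "card {u \<in> W. star A (Suc k) (xs @ [c]) u} \<le> card ((\<lambda>ys. ys @ [c]) ` ?S)"
    using fS by (intro card_mono) auto
  also have "\<dots> = card ?S" by (rule card_snoc_image)
  finally show "h \<le> card ?S" .
qed

lemma card_ge_min_degree:
  assumes "finite D" "D \<noteq> {}" "min_degree_ge D (star A k) h"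
  shows "Suc h \<le> card D"
proof -
  obtain p where p: "p \<in> D" using assms(2) by blast
  have "{u \<in> D. star A k p u} \<subseteq> D - {p}" using star_irrefl by fastforce
  then have "card {u \<in> D. star A k p u} \<le> card (D - {p})" using assms(1) by (intro card_mono) auto
  also have "\<dots> = card D - 1" using assms(1) p by simp
  finally have "card {u \<in> D. star A k p u} \<le> card D - 1" .
  moreover have "card D > 0" using assms(1) p card_gt_0_iff by blast
  ultimately show ?thesis using assms(3) p unfolding min_degree_ge_def by fastforce
qed

abbreviation reach :: "'a list set \<Rightarrow> 'a set \<Rightarrow> nat \<Rightarrow> 'a list \<Rightarrow> 'a list \<Rightarrow> bool" where
  "reach W A k \<equiv> (induced_adj W (star A k))\<^sup>*\<^sup>*"

lemma reach_mem: "(induced_adj W adj)\<^sup>*\<^sup>* x y \<Longrightarrow> x \<in> W \<Longrightarrow> y \<in> W"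
  by (induction rule: rtranclp_induct) (auto simp: induced_adj_def)

lemma reach_sym: assumes "1 \<le> k" "reach W A k x y" shows "reach W A k y x"
  using assms(2)
proof (induction rule: rtranclp_induct)
  case (step y z)
  then have "induced_adj W (star A k) z y" using star_sym[OF _ assms(1)] unfolding induced_adj_def by blast
  then show ?case using step(3) by (rule converse_rtranclp_into_rtranclp)
qed simp

lemma reach_step: "reach W A k x y \<Longrightarrow> y \<in> W \<Longrightarrow> z \<in> W \<Longrightarrow> star A k y z \<Longrightarrow> reach W A k x z"
  by (erule rtranclp.rtrancl_into_rtrancl) (simp add: induced_adj_def)

text \<open>S(A,1) is a complete graph, so every set of 1-permutations is connected.\<close>
lemma reach_length_one: assumes "X \<subseteq> perms A 1" "x \<in> X" "y \<in> X" shows "reach X A 1 x y"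
proof (cases "x = y")
  case False
  have "x \<in> perms A 1" "y \<in> perms A 1" using assms by auto
  then obtain a b where "x = [a]" "y = [b]" "b \<in> A"
    unfolding perms_def by (auto simp: length_Suc_conv)
  then have "star A 1 x y" using assms False by (intro star_newI[of _ _ _ b]) auto
  then have "induced_adj X (star A 1) x y" using assms unfolding induced_adj_def by simp
  then show ?thesis by simp
qed simp

lemma reach_snoc:
  assumes "1 \<le> k" "c \<in> A" "W \<subseteq> perms A (Suc k)" "reach (fibre c W) (A - {c}) k x y"
  shows "reach W A (Suc k) (x @ [c]) (y @ [c])"
  using assms(4)
proof (induction rule: rtranclp_induct)
  case (step y z)
  have yz: "y \<in> fibre c W" "z \<in> fibre c W" "star (A - {c}) k y z"
    using step(2) unfolding induced_adj_def by auto
  have "y \<in> perms (A - {c}) k" using yz(1) fibre_perms[OF assms(3)] by blast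
  then have "star A (Suc k) (y @ [c]) (z @ [c])" using star_snoc_iff[OF assms(1) _ assms(2)] yz(3) by simp
  moreover have "y @ [c] \<in> W" "z @ [c] \<in> W" using yz unfolding fibre_def by auto
  ultimately show ?case using step(3) reach_step by metis
qed simp

section \<open>The closed neighbourhood of a set of minimum degree h\<close>

definition nbhd :: "'a set \<Rightarrow> nat \<Rightarrow> 'a list set \<Rightarrow> 'a list set" where
  "nbhd A k D = D \<union> {q. \<exists>p\<in>D. star A k p q}"

lemma nbhd_perms: "1 \<le> k \<Longrightarrow> D \<subseteq> perms A k \<Longrightarrow> nbhd A k D \<subseteq> perms A k"
  unfolding nbhd_def using star_perms by blast

lemma finite_nbhd: "finite A \<Longrightarrow> 1 \<le> k \<Longrightarrow> D \<subseteq> perms A k \<Longrightarrow> finite (nbhd A k D)"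
  by (rule finite_subset[OF nbhd_perms finite_perms])

lemma nbhd_fibre_lift:
  assumes "1 \<le> k" "c \<in> A" "D \<subseteq> perms A (Suc k)"
  shows "(\<lambda>ys. ys @ [c]) ` nbhd (A - {c}) k (fibre c D) \<subseteq> nbhd A (Suc k) D"
proof
  fix z assume "z \<in> (\<lambda>ys. ys @ [c]) ` nbhd (A - {c}) k (fibre c D)"
  then obtain ys where z: "z = ys @ [c]" and ys: "ys \<in> nbhd (A - {c}) k (fibre c D)" by blast
  show "z \<in> nbhd A (Suc k) D"
  proof (cases "ys \<in> fibre c D")
    case False
    then obtain xs where xs: "xs \<in> fibre c D" "star (A - {c}) k xs ys"
      using ys unfolding nbhd_def by blast
    have "xs \<in> perms (A - {c}) k" using xs(1) fibre_perms[OF assms(3)] by blast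
    then have "star A (Suc k) (xs @ [c]) (ys @ [c])" using star_snoc_iff[OF assms(1) _ assms(2)] xs(2) by simp
    then show ?thesis using z xs(1) unfolding nbhd_def fibre_def by blast
  qed (use z in \<open>auto simp: nbhd_def fibre_def\<close>)
qed

lemma card_nbhd_length_one:
  assumes "finite A" "D \<subseteq> perms A 1" "D \<noteq> {}"
  shows "card A \<le> card (nbhd A 1 D)"
proof -
  obtain a where a: "[a] \<in> D" using assms(2,3) unfolding perms_def by (auto simp: length_Suc_conv)
  have "(\<lambda>b. [b]) ` A \<subseteq> nbhd A 1 D"
  proof
    fix z assume "z \<in> (\<lambda>b. [b]) ` A"
    then obtain b where b: "z = [b]" "b \<in> A" by blast
    have "b \<noteq> a \<Longrightarrow> star A 1 [a] z" using b a assms(2) by (intro star_newI[of _ _ _ b]) auto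
    then show "z \<in> nbhd A 1 D" using a b unfolding nbhd_def by (cases "b = a") auto
  qed
  then have "card ((\<lambda>b. [b]) ` A) \<le> card (nbhd A 1 D)"
    using finite_nbhd[OF assms(1) _ assms(2)] by (intro card_mono) auto
  then show ?thesis by (simp add: card_image inj_on_def)
qed

text \<open>If all of D lies in the fibre over c, the swap_ends neighbours of D add |D| new vertices.\<close>
lemma card_nbhd_one_fibre:
  assumes "finite A" "1 \<le> k" "c \<in> A" "D \<subseteq> perms A (Suc k)" "\<And>p. p \<in> D \<Longrightarrow> last p = c"
  shows "card (nbhd (A - {c}) k (fibre c D)) + card D \<le> card (nbhd A (Suc k) D)"
proof -
  let ?L = "(\<lambda>ys. ys @ [c]) ` nbhd (A - {c}) k (fibre c D)"
  have cross: "star A (Suc k) p (swap_ends p) \<and> last (swap_ends p) \<noteq> c" if p: "p \<in> D" for p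
  proof -
    have "p = butlast p @ [c]" "butlast p \<in> perms (A - {c}) k"
      using perms_snoc_split[of p A k] assms(4,5) p by auto
    then show ?thesis using star_swap_ends[OF assms(2) _ assms(3), of "butlast p"] by simp
  qed
  have "swap_ends ` D \<subseteq> nbhd A (Suc k) D" using cross unfolding nbhd_def by blast
  then have sub: "?L \<union> swap_ends ` D \<subseteq> nbhd A (Suc k) D" using nbhd_fibre_lift[OF assms(2-4)] by blast
  have disj: "?L \<inter> swap_ends ` D = {}"
  proof (rule ccontr)
    assume "?L \<inter> swap_ends ` D \<noteq> {}"
    then obtain ys p where "p \<in> D" "ys @ [c] = swap_ends p" by blast
    then show False using cross by (metis last_snoc)
  qed
  have fin: "finite ?L" "finite (swap_ends ` D)"
    using finite_nbhd[OF _ assms(2) fibre_perms[OF assms(4)]] finite_subset_perms[OF _ assms(4)] assms(1)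
    by auto
  have "card ?L + card (swap_ends ` D) = card (?L \<union> swap_ends ` D)"
    using card_Un_disjoint[OF fin disj] by simp
  also have "\<dots> \<le> card (nbhd A (Suc k) D)"
    using sub finite_nbhd[OF assms(1) _ assms(4)] assms(2) by (intro card_mono) auto
  finally show ?thesis by (simp add: card_snoc_image card_swap_ends_image[OF assms(2,4)])
qed

text \<open>The lifted neighbourhoods of two different fibres are disjoint.\<close>
lemma card_nbhd_two_fibres:
  assumes "finite A" "1 \<le> k" "c1 \<in> A" "c2 \<in> A" "c1 \<noteq> c2" "D \<subseteq> perms A (Suc k)"
  shows "card (nbhd (A - {c1}) k (fibre c1 D)) + card (nbhd (A - {c2}) k (fibre c2 D))
         \<le> card (nbhd A (Suc k) D)"
proof -
  let ?L = "\<lambda>c. (\<lambda>ys. ys @ [c]) ` nbhd (A - {c}) k (fibre c D)"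
  have fin: "finite (?L c)" for c
    using finite_nbhd[OF _ assms(2) fibre_perms[OF assms(6)]] assms(1) by auto
  have "?L c1 \<union> ?L c2 \<subseteq> nbhd A (Suc k) D" using nbhd_fibre_lift[OF assms(2) _ assms(6)] assms(3,4) by blast
  then have "card (?L c1 \<union> ?L c2) \<le> card (nbhd A (Suc k) D)"
    using finite_nbhd[OF assms(1) _ assms(6)] assms(2) by (intro card_mono) auto
  moreover have "card (?L c1 \<union> ?L c2) = card (?L c1) + card (?L c2)"
    using fin assms(5) by (intro card_Un_disjoint) auto
  ultimately show ?thesis by (simp add: card_snoc_image)
qed

text \<open>Arithmetic for the two-fibre case of the neighbourhood bound.\<close>
lemma two_fibres_arith:
  assumes "1 \<le> k" "h \<le> n - Suc k" "Suc k \<le> n"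
  shows "n + h * k \<le> (n - 1 + (h - 1) * (k - 1)) + (n - 1 + (h - 1) * (k - 1))"
proof (cases h)
  case (Suc h')
  obtain k' where k: "k = Suc k'" using assms by (cases k) auto
  define m where "m = n - (h' + k' + 3)"
  have "n = m + h' + k' + 3" using assms Suc k unfolding m_def by simp
  then show ?thesis using Suc k by (simp add: algebra_simps)
qed (use assms in simp)

text \<open>Induction on k: either D lies in one
  fibre, whose neighbourhood plus the |D| \<ge> h+1 swap_ends neighbours give the bound, or D
  meets two fibres, whose neighbourhoods (of minimum degree h-1) are disjoint.\<close>
lemma card_nbhd_ge:
  assumes "finite A" "1 \<le> k" "k \<le> card A" "h \<le> card A - k" "D \<subseteq> perms A k" "D \<noteq> {}"
    and "min_degree_ge D (star A k) h"
  shows "card A + h * (k - 1) \<le> card (nbhd A k D)"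
  using assms
proof (induction k arbitrary: A h D)
  case (Suc k)
  show ?case
  proof (cases "k = 0")
    case True
    then show ?thesis using card_nbhd_length_one[of A D] Suc.prems by simp
  next
    case False
    then have k1: "1 \<le> k" by simp
    have cardA: "card (A - {c}) = card A - 1" if "c \<in> A" for c using Suc.prems(1) that by simp
    have lastA: "last p \<in> A" if "p \<in> D" for p using perms_snoc_split(3) Suc.prems(5) that by blast
    show ?thesis
    proof (cases "\<exists>c. \<forall>p\<in>D. last p = c")
      case True
      then obtain c where c: "\<And>p. p \<in> D \<Longrightarrow> last p = c" by blast
      obtain p0 where p0: "p0 \<in> D" using Suc.prems(6) by blast
      have cA: "c \<in> A" using lastA[OF p0] c[OF p0] by simp
      have "fibre c D \<noteq> {}" using fibre_last[OF Suc.prems(5) p0] c[OF p0] by auto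
      moreover have "min_degree_ge (fibre c D) (star (A - {c}) k) h"
        using min_degree_fibre_closed[OF Suc.prems(1) k1 cA Suc.prems(5) subset_refl c _ Suc.prems(7)]
        by blast
      ultimately have "card (A - {c}) + h * (k - 1) \<le> card (nbhd (A - {c}) k (fibre c D))"
        using Suc.IH[of "A - {c}" h "fibre c D"] fibre_perms[OF Suc.prems(5)] Suc.prems(1,3,4)
          cardA[OF cA] k1 by auto
      moreover have "Suc h \<le> card D"
        using card_ge_min_degree[OF finite_subset_perms[OF Suc.prems(1,5)] Suc.prems(6,7)] .
      moreover have "h * (k - 1) + h = h * k" using k1 by (cases k) auto
      ultimately show ?thesis
        using card_nbhd_one_fibre[OF Suc.prems(1) k1 cA Suc.prems(5) c] cardA[OF cA] Suc.prems(3) by simp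
    next
      case False
      then obtain p1 p2 where p12: "p1 \<in> D" "p2 \<in> D" "last p1 \<noteq> last p2" by metis
      have fibre_bound: "card A - 1 + (h - 1) * (k - 1) \<le> card (nbhd (A - {c}) k (fibre c D))"
        if "c \<in> A" "fibre c D \<noteq> {}" for c
        using Suc.IH[of "A - {c}" "h - 1" "fibre c D"] fibre_perms[OF Suc.prems(5)] that(2)
          min_degree_fibre[OF Suc.prems(1) k1 that(1) Suc.prems(5,7)]
          Suc.prems(1,3,4) cardA[OF that(1)] k1 by auto
      have "fibre (last p) D \<noteq> {}" if "p \<in> D" for p using fibre_last[OF Suc.prems(5) that] by auto
      then have "(card A - 1 + (h - 1) * (k - 1)) + (card A - 1 + (h - 1) * (k - 1))
          \<le> card (nbhd (A - {last p1}) k (fibre (last p1) D))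
            + card (nbhd (A - {last p2}) k (fibre (last p2) D))"
        using fibre_bound[OF lastA] p12(1,2) by (intro add_mono) auto
      also have "\<dots> \<le> card (nbhd A (Suc k) D)"
        using card_nbhd_two_fibres[OF Suc.prems(1) k1 lastA lastA p12(3) Suc.prems(5)] p12(1,2) .
      finally show ?thesis using two_fibres_arith[OF k1, of h "card A"] Suc.prems(3,4) by simp
    qed
  qed
qed simp

section \<open>The lower bound\<close>

text \<open>Arithmetic used to rule out two disconnected fibres in the induction step.\<close>
lemma two_bad_fibres_arith:
  assumes "1 \<le> k" "Suc k < n" "h \<le> n - Suc k"
  shows "n - 1 + h * (k - 1) \<le> (n - 2 + (h - 1) * (k - 2)) + (n - 2 + (h - 1) * (k - 2))"
proof (cases "h = 0 \<or> k = 1")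
  case False
  then obtain h' j where hj: "h = Suc h'" "k = Suc (Suc j)" using assms(1)
    by (metis One_nat_def Suc_le_D not0_implies_Suc)
  define m where "m = n - (h' + j + 4)"
  have "n = m + h' + j + 4" using assms hj unfolding m_def by simp
  then show ?thesis unfolding hj by (simp add: algebra_simps)
qed (use assms in auto)

text \<open>Arithmetic used when too many vertices of the form (c2#m)@[c1] are removed.\<close>
lemma many_crossings_arith:
  assumes "2 \<le> k" "Suc k < n" "h \<le> n - Suc k"
  shows "n - 1 + h * (k - 1) \<le> (n - 2) * (n - 2)"
proof -
  obtain t x where tx: "n = t + 2" "k = Suc x" using assms by (metis add.commute le_add_diff_inverse2
        less_imp_le_nat not0_implies_Suc not_numeral_le_zero order.trans Suc_leD)
  have "h * x \<le> (t - 1) * (t - 1)" using assms tx by (intro mult_le_mono) auto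
  moreover have "t \<ge> 2" using assms tx by auto
  ultimately show ?thesis unfolding tx by (cases t) (auto simp: algebra_simps)
qed

lemma add_le_mult: "1 \<le> (a::nat) \<Longrightarrow> 1 \<le> b \<Longrightarrow> a + b - 1 \<le> a * b"
  by (cases a; cases b) auto

lemma top_le_prod_interval: assumes "0 < (a::nat)" "a \<le> b" shows "b \<le> \<Prod>{a..b}"
proof -
  have "b dvd \<Prod>{a..b}" using assms by (intro dvd_prodI) auto
  moreover have "\<Prod>{a..b} > 0" using assms by (intro prod_pos) auto
  ultimately show ?thesis by (rule dvd_imp_le)
qed

lemma card_crossings_le:
  assumes "finite A" "I \<subseteq> A" "J \<subseteq> A" "I \<inter> J = {}" "finite F" "j + 2 \<le> card A"
    and cross: "\<And>c1 c2 m. c1 \<in> I \<Longrightarrow> c2 \<in> J \<Longrightarrow> m \<in> perms (A - {c1, c2}) j \<Longrightarrow>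
      (c2 # m) @ [c1] \<in> F \<or> (c1 # m) @ [c2] \<in> F"
  shows "card I * card J * \<Prod>{card A - 2 - j + 1..card A - 2} \<le> card F"
proof -
  define S where "S = (SIGMA x:I \<times> J. perms (A - {fst x, snd x}) j)"
  define g where "g = (\<lambda>((c1, c2), m). if (c2 # m) @ [c1] \<in> F then (c2 # m) @ [c1] else (c1 # m) @ [c2])"
  have "g ` S \<subseteq> F"
  proof
    fix z assume "z \<in> g ` S"
    then obtain c1 c2 m where "c1 \<in> I" "c2 \<in> J" "m \<in> perms (A - {c1, c2}) j" "z = g ((c1, c2), m)"
      unfolding S_def by auto
    then show "z \<in> F" using cross[of c1 c2 m] unfolding g_def by auto
  qed
  moreover have "inj_on g S"
  proof (rule inj_onI)
    fix x y assume "x \<in> S" "y \<in> S" "g x = g y"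
    then show "x = y" using assms(4) unfolding S_def g_def by (auto split: if_splits)
  qed
  ultimately have "card S \<le> card F" using card_inj_on_le assms(5) by blast
  moreover have "card S = card I * card J * \<Prod>{card A - 2 - j + 1..card A - 2}"
  proof -
    have fin: "finite I" "finite J" using assms(1-3) finite_subset by auto
    have "card (perms (A - {fst x, snd x}) j) = \<Prod>{card A - 2 - j + 1..card A - 2}" if "x \<in> I \<times> J" for x
    proof -
      have "fst x \<in> A" "snd x \<in> A" "fst x \<noteq> snd x" using that assms(2-4) by auto
      then have "card (A - {fst x, snd x}) = card A - 2" using assms(1) by (simp add: card_Diff_subset)
      then show ?thesis using card_perms[of "A - {fst x, snd x}" j] assms(1,6) by simp
    qed
    then have "card S = (\<Sum>x\<in>I \<times> J. \<Prod>{card A - 2 - j + 1..card A - 2})"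
      unfolding S_def using fin assms(1) by (simp add: card_SigmaI finite_perms)
    then show ?thesis by (simp add: card_cartesian_product)
  qed
  ultimately show ?thesis by simp
qed

text \<open>We show that W = S(A,k+1) - F is connected.  By the bound for k at most one symbol is bad; every vertex of W reaches a
  good fibre, and two groups of good fibres not joined in W would force too many crossing vertices
  (c2#m)@[c1] into F.\<close>
locale lower_bound_step =
  fixes A :: "'a set" and k h :: nat and F :: "'a list set"
  assumes lower_bound_k: "\<And>(A' :: 'a set) h' F'. finite A' \<Longrightarrow> k < card A' \<Longrightarrow> h' \<le> card A' - k \<Longrightarrow>
      F' \<subseteq> perms A' k \<Longrightarrow> min_degree_ge (perms A' k - F') (star A' k) h' \<Longrightarrow>
      disconnected_on (perms A' k - F') (star A' k) \<Longrightarrow> card A' - 1 + h' * (k - 2) \<le> card F'"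
    and finite_A: "finite A" and k_pos: "1 \<le> k" and k_less: "Suc k < card A"
    and h_le: "h \<le> card A - Suc k" and F_perms: "F \<subseteq> perms A (Suc k)"
    and min_degree: "min_degree_ge (perms A (Suc k) - F) (star A (Suc k)) h"
    and F_small: "card F < card A - 1 + h * (k - 1)"
begin

definition W :: "'a list set" where
  "W = perms A (Suc k) - F"

definition good :: "'a \<Rightarrow> bool" where
  "good c \<longleftrightarrow> (\<forall>x\<in>fibre c W. \<forall>y\<in>fibre c W. reach (fibre c W) (A - {c}) k x y)"

lemma W_perms: "W \<subseteq> perms A (Suc k)"
  unfolding W_def by blast

lemma finite_F: "finite F"
  using finite_subset_perms[OF finite_A F_perms] .

lemma min_degree_W: "min_degree_ge W (star A (Suc k)) h"
  using min_degree unfolding W_def .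

lemma card_remove_symbol: "c \<in> A \<Longrightarrow> card (A - {c}) = card A - 1"
  using finite_A by simp

text \<open>A bad fibre is a disconnected subgraph of a copy of S(A-{c},k) of minimum degree h-1,
  so the bound for k applies to the removed part of the fibre.\<close>
lemma bad_fibre_bound:
  assumes "c \<in> A" "\<not> good c"
  shows "card A - 2 + (h - 1) * (k - 2) \<le> card (fibre c F)"
proof -
  have eq: "perms (A - {c}) k - fibre c F = fibre c W" using fibre_Diff[OF assms(1)] unfolding W_def .
  have "min_degree_ge (perms (A - {c}) k - fibre c F) (star (A - {c}) k) (h - 1)"
    unfolding eq by (rule min_degree_fibre[OF finite_A k_pos assms(1) W_perms min_degree_W])
  moreover have "disconnected_on (perms (A - {c}) k - fibre c F) (star (A - {c}) k)"
    unfolding eq disconnected_on_def using assms(2) unfolding good_def by blast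
  ultimately have "card (A - {c}) - 1 + (h - 1) * (k - 2) \<le> card (fibre c F)"
    using lower_bound_k[of "A - {c}" "h - 1" "fibre c F"] fibre_perms[OF F_perms] finite_A
      k_less h_le card_remove_symbol[OF assms(1)] by auto
  then show ?thesis using card_remove_symbol[OF assms(1)] by simp
qed

text \<open>Two bad fibres would already contain more vertices of F than F has.\<close>
lemma unique_bad:
  assumes "c1 \<in> A" "c2 \<in> A" "\<not> good c1" "\<not> good c2"
  shows "c1 = c2"
proof (rule ccontr)
  assume "c1 \<noteq> c2"
  then have "card (fibre c1 F) + card (fibre c2 F) \<le> card F" using card_two_fibres_le[OF finite_F] by blast
  then show False
    using bad_fibre_bound[OF assms(1,3)] bad_fibre_bound[OF assms(2,4)] F_small
      two_bad_fibres_arith[OF k_pos k_less h_le] by linarith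
qed

lemma card_good: "card A - 1 \<le> card {c \<in> A. good c}"
proof -
  have "card {c \<in> A. \<not> good c} \<le> 1"
    using unique_bad finite_A card_le_Suc0_iff_eq[of "{c \<in> A. \<not> good c}"] by auto
  moreover have "card A = card ({c \<in> A. good c} \<union> {c \<in> A. \<not> good c})"
    by (rule arg_cong[where f = card]) blast
  moreover have "\<dots> = card {c \<in> A. good c} + card {c \<in> A. \<not> good c}"
    using finite_A by (intro card_Un_disjoint) auto
  ultimately show ?thesis by linarith
qed

text \<open>A nonempty part D of W that lies in one fibre and cannot be left inside W forces F to be
  large: all neighbours of D outside D are in F, and by the neighbourhood bound (applied to the
  fibre of D, where minimum degree h survives) there are at least |A| - 1 + h(k-1) of them.\<close>
lemma closed_one_fibre_bound:
  assumes "D \<subseteq> W" "D \<noteq> {}" "b \<in> A" "\<And>p. p \<in> D \<Longrightarrow> last p = b"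
    and closed: "\<And>p q. p \<in> D \<Longrightarrow> q \<in> W \<Longrightarrow> star A (Suc k) p q \<Longrightarrow> q \<in> D"
  shows "card A - 1 + h * (k - 1) \<le> card F"
proof -
  have DV: "D \<subseteq> perms A (Suc k)" using assms(1) W_perms by blast
  obtain p where "p \<in> D" using assms(2) by blast
  then have "butlast p \<in> fibre b D" using fibre_last[OF DV] assms(4) by metis
  then have "fibre b D \<noteq> {}" by blast
  moreover have "min_degree_ge (fibre b D) (star (A - {b}) k) h"
    by (rule min_degree_fibre_closed[OF finite_A k_pos assms(3) DV assms(1,4) closed min_degree_W])
  ultimately have "card A - 1 + h * (k - 1) \<le> card (nbhd (A - {b}) k (fibre b D))"
    using card_nbhd_ge[of "A - {b}" k h "fibre b D"] fibre_perms[OF DV] finite_A k_pos k_less h_le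
      card_remove_symbol[OF assms(3)] by auto
  also have "\<dots> + card D \<le> card (nbhd A (Suc k) D)"
    by (rule card_nbhd_one_fibre[OF finite_A k_pos assms(3) DV assms(4)])
  also have "\<dots> \<le> card ((nbhd A (Suc k) D - D) \<union> D)"
    using finite_nbhd[OF finite_A _ DV] k_pos by (intro card_mono) (auto simp: nbhd_def)
  also have "\<dots> \<le> card (nbhd A (Suc k) D - D) + card D" by (rule card_Un_le)
  finally have "card A - 1 + h * (k - 1) \<le> card (nbhd A (Suc k) D - D)" by simp
  also have "nbhd A (Suc k) D - D \<subseteq> F"
  proof
    fix q assume "q \<in> nbhd A (Suc k) D - D"
    then obtain p where p: "p \<in> D" "star A (Suc k) p q" "q \<notin> D" unfolding nbhd_def by blast
    then have "q \<notin> W" using closed by blast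
    then show "q \<in> F" using star_perms(2)[OF p(2)] k_pos unfolding W_def by simp
  qed
  then have "card (nbhd A (Suc k) D - D) \<le> card F" using finite_F by (rule card_mono[rotated])
  finally show ?thesis .
qed

text \<open>Every vertex of W is joined inside W to a good fibre: otherwise its component would lie in
  the unique bad fibre and \<open>closed_one_fibre_bound\<close> would contradict the smallness of F.\<close>
lemma reach_good_fibre:
  assumes v: "v \<in> W"
  shows "\<exists>c xs. c \<in> A \<and> good c \<and> xs \<in> fibre c W \<and> reach W A (Suc k) v (xs @ [c])"
proof (rule ccontr)
  assume none: "\<not> ?thesis"
  define D where "D = {x. reach W A (Suc k) v x}"
  have DW: "D \<subseteq> W" using reach_mem[OF _ v] unfolding D_def by blast
  have vD: "v \<in> D" unfolding D_def by simp
  have split: "x = butlast x @ [last x]" "last x \<in> A" "butlast x \<in> fibre (last x) W"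
    if "x \<in> D" for x
  proof -
    have "x \<in> W" using that DW by blast
    then show "x = butlast x @ [last x]" "last x \<in> A" "butlast x \<in> fibre (last x) W"
      using perms_snoc_split(1,3)[of x A k] fibre_last[OF W_perms] W_perms by auto
  qed
  have bad: "\<not> good (last x)" if x: "x \<in> D" for x
  proof
    assume "good (last x)"
    moreover have "reach W A (Suc k) v (butlast x @ [last x])"
      using x split(1)[OF x] unfolding D_def by simp
    ultimately show False using none split(2,3)[OF x] by blast
  qed
  have same_last: "last x = last v" if "x \<in> D" for x
    using unique_bad[OF split(2)[OF that] split(2)[OF vD] bad[OF that] bad[OF vD]] .
  have closed: "q \<in> D" if "p \<in> D" "q \<in> W" "star A (Suc k) p q" for p q
  proof -
    have "reach W A (Suc k) v p" "p \<in> W" using that(1) DW unfolding D_def by auto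
    then show ?thesis using reach_step[OF _ _ that(2,3)] unfolding D_def by simp
  qed
  have "card A - 1 + h * (k - 1) \<le> card F"
  proof (rule closed_one_fibre_bound)
    show "D \<subseteq> W" "D \<noteq> {}" "last v \<in> A" using DW vD split(2)[OF vD] by auto
    show "\<And>p. p \<in> D \<Longrightarrow> last p = last v" by (rule same_last)
    show "\<And>p q. p \<in> D \<Longrightarrow> q \<in> W \<Longrightarrow> star A (Suc k) p q \<Longrightarrow> q \<in> D" by (rule closed)
  qed
  then show False using F_small by simp
qed

definition reached :: "'a list \<Rightarrow> 'a set" where
  "reached u = {c \<in> A. good c \<and> (\<exists>xs\<in>fibre c W. reach W A (Suc k) u (xs @ [c]))}"

lemma reach_reached:
  assumes "c \<in> reached u" "y \<in> fibre c W"
  shows "reach W A (Suc k) u (y @ [c])"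
proof -
  obtain xs where xs: "c \<in> A" "good c" "xs \<in> fibre c W" "reach W A (Suc k) u (xs @ [c])"
    using assms(1) unfolding reached_def by blast
  have "reach (fibre c W) (A - {c}) k xs y" using xs(2,3) assms(2) unfolding good_def by blast
  then have "reach W A (Suc k) (xs @ [c]) (y @ [c])" by (rule reach_snoc[OF k_pos xs(1) W_perms])
  then show ?thesis using xs(4) by (rule rtranclp_trans[rotated])
qed

lemma crossing_removed:
  assumes "c1 \<in> reached u" "c2 \<in> A" "good c2" "c2 \<notin> reached u" "m \<in> perms (A - {c1, c2}) (k - 1)"
  shows "(c2 # m) @ [c1] \<in> F \<or> (c1 # m) @ [c2] \<in> F"
proof (rule ccontr)
  assume notF: "\<not> ?thesis"
  have c1: "c1 \<in> A" "c1 \<noteq> c2" using assms(1,4) unfolding reached_def by auto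
  have m1: "c2 # m \<in> perms (A - {c1}) k" and m2: "c1 # m \<in> perms (A - {c2}) k"
    using assms(2,5) c1 k_pos unfolding perms_def by auto
  have "(c2 # m) @ [c1] \<in> perms A (Suc k)" "(c1 # m) @ [c2] \<in> perms A (Suc k)"
    using perms_snoc_iff[of "c2 # m" c1 A k] perms_snoc_iff[of "c1 # m" c2 A k] m1 m2 assms(2) c1(1)
    by blast+
  then have pW: "(c2 # m) @ [c1] \<in> W" and qW: "(c1 # m) @ [c2] \<in> W"
    using notF unfolding W_def by blast+
  have "reach W A (Suc k) u ((c2 # m) @ [c1])"
    using reach_reached[OF assms(1), of "c2 # m"] pW unfolding fibre_def by simp
  moreover have "star A (Suc k) ((c2 # m) @ [c1]) ((c1 # m) @ [c2])"
    using star_swap_ends(1)[OF k_pos m1 c1(1)] swap_ends_snoc[of "c2 # m" c1] by simp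
  ultimately have "reach W A (Suc k) u ((c1 # m) @ [c2])" using reach_step pW qW by metis
  moreover have "c1 # m \<in> fibre c2 W" using qW unfolding fibre_def by simp
  ultimately have "c2 \<in> reached u" using assms(2,3) unfolding reached_def by blast
  then show False using assms(4) by blast
qed

lemma separated_bound:
  assumes "reached u \<noteq> {}" "{c \<in> A. good c} - reached u \<noteq> {}"
  shows "(card {c \<in> A. good c} - 1) * \<Prod>{card A - 2 - (k - 1) + 1..card A - 2} \<le> card F"
proof -
  let ?I = "reached u" and ?J = "{c \<in> A. good c} - reached u"
  have IA: "?I \<subseteq> A" "?I \<subseteq> {c \<in> A. good c}" unfolding reached_def by auto
  have fin: "finite ?I" "finite ?J" using IA finite_A finite_subset by auto
  have "card ?I + card ?J = card {c \<in> A. good c}"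
    using card_Un_disjoint[OF fin] IA(2) by (simp add: Un_absorb1 Un_Diff_cancel)
  moreover have "1 \<le> card ?I" "1 \<le> card ?J" using assms fin by (auto simp: Suc_le_eq card_gt_0_iff)
  ultimately have "card {c \<in> A. good c} - 1 \<le> card ?I * card ?J"
    using add_le_mult[of "card ?I" "card ?J"] by linarith
  then have "(card {c \<in> A. good c} - 1) * \<Prod>{card A - 2 - (k - 1) + 1..card A - 2}
      \<le> card ?I * card ?J * \<Prod>{card A - 2 - (k - 1) + 1..card A - 2}"
    by (rule mult_le_mono1)
  also have "\<dots> \<le> card F"
    using crossing_removed finite_F k_less k_pos
    by (intro card_crossings_le[OF finite_A IA(1)]) auto
  finally show ?thesis .
qed

text \<open>Main claim of the induction step: W is connected.  For k = 1 all fibres are good, otherwise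
  the crossing count exceeds |F|.\<close>
theorem W_connected:
  assumes "u \<in> W" "v \<in> W"
  shows "reach W A (Suc k) u v"
proof (rule ccontr)
  assume not_uv: "\<not> reach W A (Suc k) u v"
  obtain cu xu where "cu \<in> A" "good cu" "xu \<in> fibre cu W" "reach W A (Suc k) u (xu @ [cu])"
    using reach_good_fibre[OF assms(1)] by blast
  then have I: "reached u \<noteq> {}" unfolding reached_def by blast
  obtain cv xv where cv: "cv \<in> A" "good cv" "xv \<in> fibre cv W" "reach W A (Suc k) v (xv @ [cv])"
    using reach_good_fibre[OF assms(2)] by blast
  have "cv \<notin> reached u"
  proof
    assume "cv \<in> reached u"
    then have "reach W A (Suc k) u (xv @ [cv])" using reach_reached cv(3) by blast
    moreover have "reach W A (Suc k) (xv @ [cv]) v" using reach_sym[OF _ cv(4)] by simp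
    ultimately show False using not_uv rtranclp_trans by fastforce
  qed
  then have J: "{c \<in> A. good c} - reached u \<noteq> {}" using cv(1,2) by blast
  note bound = separated_bound[OF I J]
  show False
  proof (cases "k = 1")
    case True
    then have "{c \<in> A. good c} = A"
      using reach_length_one[of "fibre c W" "A - {c}" for c] fibre_perms[OF W_perms]
      unfolding good_def by auto
    then show False using bound F_small True by simp
  next
    case False
    then have "card A - 2 \<le> \<Prod>{card A - 2 - (k - 1) + 1..card A - 2}"
      using k_pos k_less by (intro top_le_prod_interval) auto
    then have "(card A - 2) * (card A - 2)
        \<le> (card {c \<in> A. good c} - 1) * \<Prod>{card A - 2 - (k - 1) + 1..card A - 2}"
      using card_good by (intro mult_le_mono) auto
    then have "(card A - 2) * (card A - 2) \<le> card F" using bound by linarith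
    then show False using many_crossings_arith[OF _ k_less h_le] False k_pos F_small by linarith
  qed
qed

end

theorem cut_lower_bound:
  assumes "finite A" "1 \<le> k" "k < card A" "h \<le> card A - k" "F \<subseteq> perms A k"
    and "min_degree_ge (perms A k - F) (star A k) h" "disconnected_on (perms A k - F) (star A k)"
  shows "card A - 1 + h * (k - 2) \<le> card F"
  using assms
proof (induction k arbitrary: A h F)
  case (Suc k)
  show ?case
  proof (cases "k = 0")
    case True
    have "\<forall>u\<in>perms A 1 - F. \<forall>v\<in>perms A 1 - F. reach (perms A 1 - F) A 1 u v"
      using reach_length_one[of "perms A 1 - F" A] by blast
    then show ?thesis using Suc.prems(7) True unfolding disconnected_on_def by auto
  next
    case False
    show ?thesis
    proof (rule ccontr)
      assume "\<not> ?thesis"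
      then interpret lower_bound_step A k h F
        using Suc False by unfold_locales auto
      show False using W_connected Suc.prems(7) unfolding disconnected_on_def W_def by blast
    qed
  qed
qed simp

section \<open>The upper bound: an explicit h-cut\<close>

text \<open>Fix a (k-1)-permutation t and an (h+1)-set A0 of symbols not in t.  The vertices a#t with
  a in A0 form a clique in which every vertex has degree h.  Their other neighbours are the
  vertices a#t with a outside A0 (\<open>cut_new\<close>) and the swaps t!i # t[i:=a] (\<open>cut_swap\<close>); removing
  these n - k - h + (k-1)(h+1) = n - 1 + h(k-2) vertices isolates the clique.\<close>
definition isolated :: "'a list \<Rightarrow> 'a set \<Rightarrow> 'a list set" where
  "isolated t A0 = (\<lambda>a. a # t) ` A0"

definition cut_new :: "'a set \<Rightarrow> 'a list \<Rightarrow> 'a set \<Rightarrow> 'a list set" where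
  "cut_new A t A0 = (\<lambda>a. a # t) ` (A - set t - A0)"

definition cut_swap :: "'a list \<Rightarrow> 'a set \<Rightarrow> 'a list set" where
  "cut_swap t A0 = (\<lambda>(i, a). t ! i # t[i := a]) ` ({..<length t} \<times> A0)"

definition cut_set :: "'a set \<Rightarrow> 'a list \<Rightarrow> 'a set \<Rightarrow> 'a list set" where
  "cut_set A t A0 = cut_new A t A0 \<union> cut_swap t A0"

lemma update_position_unique:
  assumes "a \<notin> set t" "i < length t" "t[i := a] = t[j := a']"
  shows "i = j"
proof (rule ccontr)
  assume "i \<noteq> j"
  then have "a = t ! i" using assms(2,3) by (metis nth_list_update_eq nth_list_update_neq)
  then show False using assms(1,2) nth_mem by metis
qed

context
  fixes A :: "'a set" and k h :: nat and t :: "'a list" and A0 :: "'a set"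
  assumes finite_A: "finite A" and k_ge: "2 \<le> k" and k_less: "k < card A" and h_le: "h \<le> card A - k"
    and t_perm: "t \<in> perms A (k - 1)" and A0_sub: "A0 \<subseteq> A - set t" and card_A0: "card A0 = Suc h"
begin

lemma t_props: "distinct t" "length t = k - 1" "set t \<subseteq> A"
  using t_perm unfolding perms_def by auto

lemma finite_A0: "finite A0"
  using card_A0 card.infinite by fastforce

lemma update_props:
  assumes "i < length t" "a \<in> A - set t"
  shows "distinct (t[i := a])" "set (t[i := a]) = insert a (set t - {t ! i})" "t ! i \<noteq> a"
proof -
  show "distinct (t[i := a])" using t_props(1) assms by (intro distinct_list_update) auto
  show "set (t[i := a]) = insert a (set t - {t ! i})" using set_update_distinct[OF t_props(1) assms(1)] .
  show "t ! i \<noteq> a" using assms nth_mem by fastforce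
qed

lemma isolated_perms: "isolated t A0 \<subseteq> perms A k"
  unfolding isolated_def perms_def using t_props A0_sub k_ge by auto

lemma cut_set_perms: "cut_set A t A0 \<subseteq> perms A k"
proof -
  have "cut_new A t A0 \<subseteq> perms A k" unfolding cut_new_def perms_def using t_props k_ge by auto
  moreover have "z \<in> perms A k" if z: "z \<in> cut_swap t A0" for z
  proof -
    obtain i a where ia: "i < length t" "a \<in> A0" "z = t ! i # t[i := a]"
      using z unfolding cut_swap_def by auto
    have a: "a \<in> A - set t" using ia(2) A0_sub by blast
    then show ?thesis using ia update_props[OF ia(1) a] t_props k_ge nth_mem[OF ia(1)]
      unfolding perms_def by auto
  qed
  ultimately show ?thesis unfolding cut_set_def by blast
qed

lemma card_cut_set: "card (cut_set A t A0) \<le> card A - 1 + h * (k - 2)"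
proof -
  have "card (cut_set A t A0) \<le> card (cut_new A t A0) + card (cut_swap t A0)"
    unfolding cut_set_def by (rule card_Un_le)
  moreover have "card (cut_new A t A0) \<le> card (A - set t - A0)"
    unfolding cut_new_def using finite_A by (intro card_image_le) simp
  moreover have "card (cut_swap t A0) \<le> card ({..<length t} \<times> A0)"
    unfolding cut_swap_def using finite_A0 by (intro card_image_le) simp
  moreover have "card ({..<length t} \<times> A0) = (k - 1) * Suc h"
    using t_props(2) card_A0 by (simp add: card_cartesian_product)
  moreover have "card (A - set t - A0) = card A - (k - 1) - Suc h"
    using t_props finite_A A0_sub finite_A0 card_A0 by (simp add: card_Diff_subset distinct_card)
  moreover have "card A - (k - 1) - Suc h + (k - 1) * Suc h = card A - 1 + h * (k - 2)"
  proof -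
    obtain j where j: "k = Suc (Suc j)" using k_ge by (metis add_2_eq_Suc le_Suc_ex)
    have "card A \<ge> k + h" using k_less h_le by simp
    then show ?thesis unfolding j by (simp add: algebra_simps)
  qed
  ultimately show ?thesis by linarith
qed

text \<open>The clique and the cut are disjoint: the tail t[i:=a] of a swap vertex differs from t.\<close>
lemma isolated_not_cut: "isolated t A0 \<inter> cut_set A t A0 = {}"
  using A0_sub nth_mem unfolding isolated_def cut_set_def cut_new_def cut_swap_def by fastforce

lemma isolated_closed:
  assumes "x \<in> isolated t A0" "star A k x y" "y \<notin> cut_set A t A0"
  shows "y \<in> isolated t A0"
proof -
  obtain a where a: "a \<in> A0" "x = a # t" using assms(1) unfolding isolated_def by blast
  from assms(2) show ?thesis
  proof (cases rule: starE)
    case (swap i)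
    obtain i' where i': "i = Suc i'" "i' < length t" using swap t_props(2) by (cases i) auto
    then have "y \<in> cut_swap t A0" using swap(4) a unfolding cut_swap_def by force
    then show ?thesis using assms(3) unfolding cut_set_def by blast
  next
    case (new b)
    then show ?thesis using assms(3) a unfolding isolated_def cut_set_def cut_new_def by auto
  qed
qed

lemma reach_isolated:
  assumes "reach (perms A k - cut_set A t A0) A k x y" "x \<in> isolated t A0"
  shows "y \<in> isolated t A0"
  using assms
proof (induction rule: rtranclp_induct)
  case (step y z)
  then show ?case using isolated_closed unfolding induced_adj_def by blast
qed simp

text \<open>A vertex outside both the clique and the cut: replace t!0 by a symbol of A0 and put
  a further unused symbol in front.\<close>
lemma exists_outside: "\<exists>w \<in> perms A k - cut_set A t A0. w \<notin> isolated t A0"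
proof -
  obtain \<alpha> where \<alpha>: "\<alpha> \<in> A0" using card_A0 by (metis card.empty ex_in_conv nat.distinct(1))
  have \<alpha>A: "\<alpha> \<in> A - set t" using \<alpha> A0_sub by blast
  have "card (A - set t - {\<alpha>}) = card A - (k - 1) - 1"
    using t_props finite_A \<alpha>A by (simp add: card_Diff_subset distinct_card card_Diff_singleton)
  then have "card (A - set t - {\<alpha>}) > 0" using k_less k_ge by simp
  then obtain x where x: "x \<in> A - set t - {\<alpha>}" by (auto simp: card_gt_0_iff)
  have t0: "0 < length t" using t_props k_ge by simp
  note up = update_props[OF t0 \<alpha>A]
  define w where "w = x # t[0 := \<alpha>]"
  have "w \<in> perms A k" using up x t_props k_ge \<alpha>A unfolding w_def perms_def by auto
  moreover have t_changed: "t[0 := \<alpha>] \<noteq> t" using up(3) t0 by (metis nth_list_update_eq)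
  then have "w \<notin> isolated t A0" "w \<notin> cut_new A t A0" unfolding w_def isolated_def cut_new_def by auto
  moreover have "w \<notin> cut_swap t A0"
    using x nth_mem unfolding w_def cut_swap_def by fastforce
  ultimately show ?thesis unfolding cut_set_def by blast
qed

text \<open>Inside the clique each vertex keeps its h neighbours b#t, b in A0.\<close>
lemma degree_isolated:
  assumes "v \<in> isolated t A0"
  shows "h \<le> card {u \<in> perms A k - cut_set A t A0. star A k v u}"
proof -
  obtain a where a: "a \<in> A0" "v = a # t" using assms unfolding isolated_def by blast
  have finN: "finite {u \<in> perms A k - cut_set A t A0. star A k v u}"
    by (rule finite_subset_perms[OF finite_A, of _ k]) auto
  have "(\<lambda>b. b # t) ` (A0 - {a}) \<subseteq> {u \<in> perms A k - cut_set A t A0. star A k v u}"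
  proof
    fix u assume "u \<in> (\<lambda>b. b # t) ` (A0 - {a})"
    then obtain b where b: "b \<in> A0 - {a}" "u = b # t" by blast
    then have "u \<in> isolated t A0" unfolding isolated_def by blast
    moreover have "star A k v u" using b a A0_sub isolated_perms assms by (intro star_newI[of _ _ _ b]) auto
    ultimately show "u \<in> {u \<in> perms A k - cut_set A t A0. star A k v u}"
      using isolated_perms isolated_not_cut by blast
  qed
  then have "card ((\<lambda>b. b # t) ` (A0 - {a})) \<le> card {u \<in> perms A k - cut_set A t A0. star A k v u}"
    using finN by (intro card_mono)
  moreover have "card ((\<lambda>b. b # t) ` (A0 - {a})) = h"
    using card_A0 a(1) finite_A0 by (subst card_image) (auto simp: inj_on_def)
  ultimately show ?thesis by simp
qed

text \<open>A vertex x#s outside the clique has the |A| - k \<ge> h neighbours b#s.  None of them is in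
  \<open>cut_new\<close>, and at most one, t!i#s, is in \<open>cut_swap\<close>: this happens only when s = t[i:=a] with
  a in A0, and then the swap neighbour a # t[i:=x] replaces it.\<close>
lemma cut_swap_first_symbol:
  assumes "b # s \<in> cut_swap t A0" "s = t[i := a]" "i < length t" "a \<notin> set t"
  shows "b = t ! i"
proof -
  obtain j a' where j: "b = t ! j" "s = t[j := a']" using assms(1) unfolding cut_swap_def by auto
  then have "t[i := a] = t[j := a']" using assms(2) by simp
  then have "i = j" by (rule update_position_unique[OF assms(4,3)])
  then show ?thesis using j(1) by simp
qed

lemma swap_neighbour_outside:
  assumes v: "v \<in> perms A k - cut_set A t A0" "v = x # s" and ia: "s = t[i := a]" "i < length t" "a \<in> A0"
  shows "star A k v (a # t[i := x])" "a # t[i := x] \<notin> cut_set A t A0" "a # t[i := x] \<noteq> b # s"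
proof -
  have a: "a \<in> A - set t" using ia(3) A0_sub by blast
  have v_props: "distinct v" "length v = k" using v unfolding perms_def by auto
  have x_ne: "x \<noteq> t ! i"
  proof
    assume "x = t ! i"
    then have "v = (\<lambda>(i, a). t ! i # t[i := a]) (i, a)" using v(2) ia(1) by simp
    then have "v \<in> cut_swap t A0" using ia(2,3) unfolding cut_swap_def by blast
    then show False using v unfolding cut_set_def by blast
  qed
  have "a # t[i := x] = v[0 := v ! Suc i, Suc i := v ! 0]" using v ia by simp
  then show "star A k v (a # t[i := x])" using v v_props ia(2) t_props(2)
    by (intro star_swapI[of _ _ _ "Suc i"]) auto
  have "t[i := x] \<noteq> t" using x_ne ia(2) by (metis nth_list_update_eq)
  then have "a # t[i := x] \<notin> cut_new A t A0" unfolding cut_new_def by blast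
  moreover have "a # t[i := x] \<notin> cut_swap t A0"
  proof
    assume "a # t[i := x] \<in> cut_swap t A0"
    then obtain j where "j < length t" "a = t ! j" unfolding cut_swap_def by auto
    then show False using a by auto
  qed
  ultimately show "a # t[i := x] \<notin> cut_set A t A0" unfolding cut_set_def by blast
  show "a # t[i := x] \<noteq> b # s"
  proof
    assume "a # t[i := x] = b # s"
    then have "s = t[i := x]" by simp
    then have "x \<in> set s" using ia(2) by (simp add: set_update_memI)
    then show False using v v_props by simp
  qed
qed

lemma new_neighbours_outside:
  assumes v: "v \<in> perms A k - cut_set A t A0" "v \<notin> isolated t A0" "v = x # s"
  shows "(\<lambda>b. b # s) ` (A - set v) - cut_swap t A0 \<subseteq> {u \<in> perms A k - cut_set A t A0. star A k v u}"
proof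
  have s_ne: "s \<noteq> t"
  proof
    assume "s = t"
    then have "v \<in> isolated t A0 \<or> v \<in> cut_new A t A0"
      using v unfolding isolated_def cut_new_def perms_def by auto
    then show False using v unfolding cut_set_def by blast
  qed
  fix u assume "u \<in> (\<lambda>b. b # s) ` (A - set v) - cut_swap t A0"
  then obtain b where b: "b \<in> A - set v" "u = b # s" "u \<notin> cut_swap t A0" by blast
  have "star A k v u" using b v by (intro star_newI[of _ _ _ b]) auto
  moreover have "u \<notin> cut_new A t A0" using b(2) s_ne unfolding cut_new_def by auto
  ultimately show "u \<in> {u \<in> perms A k - cut_set A t A0. star A k v u}"
    using b(3) star_perms(2)[of A k v u] k_ge unfolding cut_set_def by auto
qed

lemma degree_outside:
  assumes v: "v \<in> perms A k - cut_set A t A0" "v \<notin> isolated t A0"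
  shows "h \<le> card {u \<in> perms A k - cut_set A t A0. star A k v u}"
proof -
  let ?N = "{u \<in> perms A k - cut_set A t A0. star A k v u}"
  obtain x s where xs: "v = x # s" using v k_ge unfolding perms_def by (cases v) auto
  have finN: "finite ?N" by (rule finite_subset_perms[OF finite_A, of _ k]) auto
  define C where "C = (\<lambda>b. b # s) ` (A - set v)"
  have "card C = card A - k"
    using v finite_A unfolding C_def perms_def
    by (simp add: card_image inj_on_def card_Diff_subset distinct_card)
  then have hC: "h \<le> card C" using h_le by simp
  have C_N: "C - cut_swap t A0 \<subseteq> ?N" unfolding C_def by (rule new_neighbours_outside[OF v xs])
  show ?thesis
  proof (cases "\<exists>i a. i < length t \<and> a \<in> A0 \<and> s = t[i := a]")
    case False
    have "u \<notin> cut_swap t A0" if "u \<in> C" for u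
    proof
      assume "u \<in> cut_swap t A0"
      then obtain j a' where j: "j < length t" "a' \<in> A0" "u = t ! j # t[j := a']"
        unfolding cut_swap_def by auto
      then have "s = t[j := a']" using that unfolding C_def by auto
      then show False using False j(1,2) by blast
    qed
    then have "C \<subseteq> ?N" using C_N by blast
    then have "card C \<le> card ?N" by (rule card_mono[OF finN])
    then show ?thesis using hC by linarith
  next
    case True
    then obtain i a where ia: "i < length t" "a \<in> A0" "s = t[i := a]" by blast
    have a: "a \<notin> set t" using ia(2) A0_sub by blast
    note y = swap_neighbour_outside[OF v(1) xs ia(3,1,2)]
    have "C \<inter> cut_swap t A0 \<subseteq> {t ! i # s}"
      using cut_swap_first_symbol[OF _ ia(3,1) a] unfolding C_def by blast
    then have "C - {t ! i # s} \<subseteq> ?N" using C_N by blast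
    moreover have "a # t[i := x] \<in> ?N" using y(1,2) star_perms(2)[OF y(1)] k_ge by simp
    ultimately have sub: "insert (a # t[i := x]) (C - {t ! i # s}) \<subseteq> ?N" by blast
    have "card C \<le> Suc (card (C - {t ! i # s}))"
      by (simp add: card_Diff_singleton_if) linarith
    also have "\<dots> = card (insert (a # t[i := x]) (C - {t ! i # s}))"
    proof -
      have "a # t[i := x] \<notin> C" using y(3) unfolding C_def by blast
      moreover have "finite C" using finite_A unfolding C_def by simp
      ultimately show ?thesis by simp
    qed
    also have "\<dots> \<le> card ?N" using sub by (rule card_mono[OF finN])
    finally show ?thesis using hC by linarith
  qed
qed

theorem cut_set_is_h_cut: "h_cut (perms A k) (star A k) h (cut_set A t A0)"
  unfolding h_cut_def
proof (intro conjI)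
  show "cut_set A t A0 \<subseteq> perms A k" by (rule cut_set_perms)
  show "min_degree_ge (perms A k - cut_set A t A0) (star A k) h"
    unfolding min_degree_ge_def
  proof
    fix v assume v: "v \<in> perms A k - cut_set A t A0"
    show "h \<le> card {u \<in> perms A k - cut_set A t A0. star A k v u}"
    proof (cases "v \<in> isolated t A0")
      case True
      then show ?thesis by (rule degree_isolated)
    next
      case False
      with v show ?thesis by (rule degree_outside)
    qed
  qed
  obtain a where "a \<in> A0" using card_A0 by force
  then have a: "a # t \<in> isolated t A0" unfolding isolated_def by blast
  then have a_rest: "a # t \<in> perms A k - cut_set A t A0" using isolated_perms isolated_not_cut by blast
  obtain w where w: "w \<in> perms A k - cut_set A t A0" "w \<notin> isolated t A0"
    using exists_outside by blast
  have "\<not> reach (perms A k - cut_set A t A0) A k (a # t) w" using reach_isolated[OF _ a] w(2) by blast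
  then show "disconnected_on (perms A k - cut_set A t A0) (star A k)"
    unfolding disconnected_on_def using a_rest w(1) by blast
qed

end

lemma exists_small_cut:
  assumes "finite A" "2 \<le> k" "k < card A" "h \<le> card A - k"
  shows "\<exists>S. h_cut (perms A k) (star A k) h S \<and> card S \<le> card A - 1 + h * (k - 2)"
proof -
  have "perms A (k - 1) \<noteq> {}" using perms_nonempty[OF assms(1)] assms(3) by simp
  then obtain t where t: "t \<in> perms A (k - 1)" by blast
  then have "card (A - set t) = card A - (k - 1)"
    using assms(1) unfolding perms_def by (simp add: card_Diff_subset distinct_card)
  then have "Suc h \<le> card (A - set t)" using assms(2-4) by simp
  then obtain A0 where "A0 \<subseteq> A - set t" "card A0 = Suc h" by (meson obtain_subset_with_card_n)
  then show ?thesis using cut_set_is_h_cut[OF assms t] card_cut_set[OF assms t] by blast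
qed

lemma h_super_connectivity_eqI:
  assumes "h_cut V adj h S" "card S \<le> b" "\<And>S. h_cut V adj h S \<Longrightarrow> b \<le> card S"
  shows "h_super_connectivity V adj h = b"
proof -
  let ?M = "{card S | S. h_cut V adj h S}"
  have "Inf ?M \<in> ?M" using assms(1) by (intro Inf_nat_def1) blast
  then have "b \<le> Inf ?M" using assms(3) by auto
  moreover have "Inf ?M \<le> card S" using assms(1) by (intro cInf_lower) auto
  ultimately show ?thesis unfolding h_super_connectivity_def using assms(2) by linarith
qed

theorem theorem3p4:
  fixes n k h :: nat
  assumes "2 \<le> k" and "k \<le> n - 1" and "h \<le> n - k"
  shows "h_super_connectivity (star_verts n k) (star_adj n k) h = n + h * (k - 2) - 1"
proof -
  have verts: "star_verts n k = perms {1..n} k"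
    unfolding star_verts_def perms_def by simp
  have adj: "star_adj n k = star {1..n} k"
    unfolding star_adj_def star_def star_verts_def perms_def by (intro ext) simp
  have n: "card {1..n} = n" "k < card {1..n}" "h \<le> card {1..n} - k" using assms by auto
  have bound: "n + h * (k - 2) - 1 = card {1..n} - 1 + h * (k - 2)" using assms by simp
  obtain S where "h_cut (perms {1..n} k) (star {1..n} k) h S" "card S \<le> card {1..n} - 1 + h * (k - 2)"
    using exists_small_cut[OF finite_atLeastAtMost assms(1) n(2,3)] by blast
  moreover have "card {1..n} - 1 + h * (k - 2) \<le> card F"
    if "h_cut (perms {1..n} k) (star {1..n} k) h F" for F
    using cut_lower_bound[OF finite_atLeastAtMost _ n(2,3)] that assms(1) unfolding h_cut_def by auto
  ultimately show ?thesis unfolding verts adj bound by (rule h_super_connectivity_eqI)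
qed

end
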